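(* Let $\alpha,\beta$ be cardinals with $\alpha>2$ and $\beta>2$. The class of $(\alpha,\beta)$-representable posets has no universal first-order axiomatization (in the signature consisting of one binary relation $\leq$).
   Context: For posets $P,Q$, a monotone map $h:P\to Q$ is an $(\alpha,\beta)$-morphism if whenever $S\subseteq P$ with $|S|<\alpha$ and $\bigwedge S$ exists in $P$, then $h(\bigwedge S)=\bigwedge h[S]$, and whenever $T\subseteq P$ with $|T|<\beta$ and $\bigvee T$ exists in $P$, then $h(\bigvee T)=\bigvee h[T]$. A poset $P$ is $(\alpha,\beta)$-representable if there is a set $X$ and an $(\alpha,\beta)$-morphism $h:P\to\wp(X)$ that is an order embedding, where $\wp(X)$ is the power set of $X$ ordered by inclusion. *)

theory Defs
  imports Main
begin

datatype fm =
    FEq nat nat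
  | FLe nat nat
  | FFalse
  | FNeg fm
  | FConj fm fm
  | FDisj fm fm
  | FImp fm fm
  | FAll nat fm
  | FEx nat fm

fun qfree :: "fm \<Rightarrow> bool" where
  "qfree (FEq x y) = True"
| "qfree (FLe x y) = True"
| "qfree FFalse = True"
| "qfree (FNeg p) = qfree p"
| "qfree (FConj p q) = (qfree p \<and> qfree q)"
| "qfree (FDisj p q) = (qfree p \<and> qfree q)"
| "qfree (FImp p q) = (qfree p \<and> qfree q)"
| "qfree (FAll x p) = False"
| "qfree (FEx x p) = False"

fun freevars :: "fm \<Rightarrow> nat set" where
  "freevars (FEq x y) = {x, y}"
| "freevars (FLe x y) = {x, y}"
| "freevars FFalse = {}"
| "freevars (FNeg p) = freevars p"
| "freevars (FConj p q) = freevars p \<union> freevars q"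
| "freevars (FDisj p q) = freevars p \<union> freevars q"
| "freevars (FImp p q) = freevars p \<union> freevars q"
| "freevars (FAll x p) = freevars p - {x}"
| "freevars (FEx x p) = freevars p - {x}"

fun universal :: "fm \<Rightarrow> bool" where
  "universal (FAll x p) = universal p"
| "universal p = qfree p"

definition universal_sentence :: "fm \<Rightarrow> bool" where
  "universal_sentence p \<longleftrightarrow> universal p \<and> freevars p = {}"

fun sat :: "'a set \<Rightarrow> ('a \<Rightarrow> 'a \<Rightarrow> bool) \<Rightarrow> (nat \<Rightarrow> 'a) \<Rightarrow> fm \<Rightarrow> bool" where
  "sat A R e (FEq x y) = (e x = e y)"
| "sat A R e (FLe x y) = R (e x) (e y)"
| "sat A R e FFalse = False"
| "sat A R e (FNeg p) = (\<not> sat A R e p)"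
| "sat A R e (FConj p q) = (sat A R e p \<and> sat A R e q)"
| "sat A R e (FDisj p q) = (sat A R e p \<or> sat A R e q)"
| "sat A R e (FImp p q) = (sat A R e p \<longrightarrow> sat A R e q)"
| "sat A R e (FAll x p) = (\<forall>a\<in>A. sat A R (e(x := a)) p)"
| "sat A R e (FEx x p) = (\<exists>a\<in>A. sat A R (e(x := a)) p)"

definition fo_models :: "'a set \<Rightarrow> ('a \<Rightarrow> 'a \<Rightarrow> bool) \<Rightarrow> fm set \<Rightarrow> bool" where
  "fo_models A R T \<longleftrightarrow> (\<forall>p\<in>T. \<forall>e. (\<forall>n. e n \<in> A) \<longrightarrow> sat A R e p)"

definition poset_on :: "'a set \<Rightarrow> ('a \<Rightarrow> 'a \<Rightarrow> bool) \<Rightarrow> bool" where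
  "poset_on A R \<longleftrightarrow> (\<forall>x\<in>A. R x x)
     \<and> (\<forall>x\<in>A. \<forall>y\<in>A. R x y \<and> R y x \<longrightarrow> x = y)
     \<and> (\<forall>x\<in>A. \<forall>y\<in>A. \<forall>z\<in>A. R x y \<and> R y z \<longrightarrow> R x z)"

definition is_meet :: "'a set \<Rightarrow> ('a \<Rightarrow> 'a \<Rightarrow> bool) \<Rightarrow> 'a set \<Rightarrow> 'a \<Rightarrow> bool" where
  "is_meet A R S m \<longleftrightarrow> m \<in> A \<and> (\<forall>s\<in>S. R m s) \<and> (\<forall>x\<in>A. (\<forall>s\<in>S. R x s) \<longrightarrow> R x m)"

definition is_join :: "'a set \<Rightarrow> ('a \<Rightarrow> 'a \<Rightarrow> bool) \<Rightarrow> 'a set \<Rightarrow> 'a \<Rightarrow> bool" where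
  "is_join A R S m \<longleftrightarrow> m \<in> A \<and> (\<forall>s\<in>S. R s m) \<and> (\<forall>x\<in>A. (\<forall>s\<in>S. R s x) \<longrightarrow> R m x)"

text \<open>Cardinals are cardinal orders (of arbitrary types); |S| < alpha is card_of S <o alpha.
  The meet in the powerset of X of a family is its intersection (X for the empty family),
  the join is its union.\<close>
definition ab_morphism_pow ::
  "'k rel \<Rightarrow> 'l rel \<Rightarrow> 'a set \<Rightarrow> ('a \<Rightarrow> 'a \<Rightarrow> bool) \<Rightarrow> 'b set \<Rightarrow> ('a \<Rightarrow> 'b set) \<Rightarrow> bool" where
  "ab_morphism_pow \<alpha> \<beta> A R X h \<longleftrightarrow>
     (\<forall>x\<in>A. h x \<subseteq> X)
   \<and> (\<forall>x\<in>A. \<forall>y\<in>A. R x y \<longrightarrow> h x \<subseteq> h y)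
   \<and> (\<forall>S m. S \<subseteq> A \<and> (card_of S, \<alpha>) \<in> ordLess \<and> is_meet A R S m \<longrightarrow> h m = X \<inter> \<Inter> (h ` S))
   \<and> (\<forall>T m. T \<subseteq> A \<and> (card_of T, \<beta>) \<in> ordLess \<and> is_join A R T m \<longrightarrow> h m = \<Union> (h ` T))"

definition order_embedding_on :: "'a set \<Rightarrow> ('a \<Rightarrow> 'a \<Rightarrow> bool) \<Rightarrow> ('a \<Rightarrow> 'b set) \<Rightarrow> bool" where
  "order_embedding_on A R h \<longleftrightarrow> (\<forall>x\<in>A. \<forall>y\<in>A. R x y \<longleftrightarrow> h x \<subseteq> h y)"

text \<open>The set X is taken to be a set of subsets of the
  carrier type; this is without loss of generality (replace each point x of an arbitrary X by
  the set of elements p with x in h p).\<close>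
definition ab_representable ::
  "'k rel \<Rightarrow> 'l rel \<Rightarrow> 'a set \<Rightarrow> ('a \<Rightarrow> 'a \<Rightarrow> bool) \<Rightarrow> bool" where
  "ab_representable \<alpha> \<beta> A R \<longleftrightarrow> poset_on A R \<and>
     (\<exists>(X :: 'a set set) h. ab_morphism_pow \<alpha> \<beta> A R X h \<and> order_embedding_on A R h)"

end

theory Submission
  imports Defs
begin

text \<open>Universal sentences are preserved under substructures, so the class of
  (\<alpha>,\<beta>)-representable posets would be closed under subposets.  It is not: the powerset of
  a three-element set is representable, but its subposet M3 (bottom 0, three atoms a, b, c,
  top 1) is not.  A map h preserving the binary meets a \<and> c = 0 = b \<and> c and the binary join
  a \<or> b = 1 satisfies h(c) = h(c) \<inter> (h(a) \<union> h(b)) = h(0), so it is no order embedding.\<close>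

lemma sat_qfree_carrier_indep: "qfree p \<Longrightarrow> sat A R e p = sat B R e p"
  by (induction p arbitrary: e) auto

lemma sat_universal_substructure:
  assumes "universal p" "B \<subseteq> A" "\<forall>n. e n \<in> B" "sat A R e p"
  shows "sat B R e p"
  using assms
proof (induction p arbitrary: e)
  case (FAll x p)
  then show ?case by auto
qed (auto simp del: sat.simps intro: sat_qfree_carrier_indep[THEN iffD1])

lemma fo_models_universal_substructure:
  assumes "\<forall>p\<in>T. universal p" "fo_models A R T" "B \<subseteq> A"
  shows "fo_models B R T"
  using assms sat_universal_substructure unfolding fo_models_def by (metis subsetD)

lemma is_meet_set_family:
  assumes "is_meet A (\<lambda>x y. H x \<subseteq> H y) S m" "H ` A \<subseteq> Pow X" "X \<inter> \<Inter>(H ` S) \<in> H ` A"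
  shows "H m = X \<inter> \<Inter>(H ` S)"
proof -
  obtain m' where "m' \<in> A" "H m' = X \<inter> \<Inter>(H ` S)" using assms(3) by blast
  then show ?thesis using assms(1,2) unfolding is_meet_def by blast
qed

lemma is_join_set_family:
  assumes "is_join A (\<lambda>x y. H x \<subseteq> H y) S m" "\<Union>(H ` S) \<in> H ` A"
  shows "H m = \<Union>(H ` S)"
proof -
  obtain m' where "m' \<in> A" "H m' = \<Union>(H ` S)" using assms(2) by blast
  then show ?thesis using assms(1) unfolding is_join_def by blast
qed

lemma ab_representable_set_family:
  fixes H :: "'a \<Rightarrow> 'a set set"
  assumes "inj_on H A" "H ` A \<subseteq> Pow X"
    and "\<And>S. S \<subseteq> A \<Longrightarrow> X \<inter> \<Inter>(H ` S) \<in> H ` A"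
    and "\<And>S. S \<subseteq> A \<Longrightarrow> \<Union>(H ` S) \<in> H ` A"
  shows "ab_representable \<alpha> \<beta> A (\<lambda>x y. H x \<subseteq> H y)"
proof -
  have "poset_on A (\<lambda>x y. H x \<subseteq> H y)"
    using assms(1) unfolding poset_on_def by (auto dest: inj_onD)
  moreover have "ab_morphism_pow \<alpha> \<beta> A (\<lambda>x y. H x \<subseteq> H y) X H"
    unfolding ab_morphism_pow_def
  proof (intro conjI allI impI)
    fix S m assume "S \<subseteq> A \<and> (card_of S, \<alpha>) \<in> ordLess \<and> is_meet A (\<lambda>x y. H x \<subseteq> H y) S m"
    then show "H m = X \<inter> \<Inter>(H ` S)"
      using is_meet_set_family[OF _ assms(2) assms(3)] by blast
  next
    fix S m assume "S \<subseteq> A \<and> (card_of S, \<beta>) \<in> ordLess \<and> is_join A (\<lambda>x y. H x \<subseteq> H y) S m"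
    then show "H m = \<Union>(H ` S)"
      using is_join_set_family[OF _ assms(4)] by blast
  qed (use assms(2) in auto)
  moreover have "order_embedding_on A (\<lambda>x y. H x \<subseteq> H y) H"
    unfolding order_embedding_on_def by blast
  ultimately show ?thesis
    unfolding ab_representable_def by (intro conjI exI)
qed

lemma card_of_doubleton_ordLess:
  assumes "(card_of {0::nat, 1}, \<alpha>) \<in> ordLess"
  shows "(card_of {x, y}, \<alpha>) \<in> ordLess"
proof -
  let ?f = "\<lambda>u. if u = x then 0 else 1::nat"
  have "inj_on ?f {x, y}" "?f ` {x, y} \<subseteq> {0, 1}"
    by (auto simp: inj_on_def)
  then have "(card_of {x, y}, card_of {0::nat, 1}) \<in> ordLeq"
    using card_of_ordLeq by blast
  then show ?thesis using assms by (rule ordLeq_ordLess_trans)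
qed

lemma ab_morphism_powD:
  assumes "ab_morphism_pow \<alpha> \<beta> A R X h"
  shows "x \<in> A \<Longrightarrow> h x \<subseteq> X"
    and "\<lbrakk>S \<subseteq> A; (card_of S, \<alpha>) \<in> ordLess; is_meet A R S m\<rbrakk> \<Longrightarrow> h m = X \<inter> \<Inter>(h ` S)"
    and "\<lbrakk>T \<subseteq> A; (card_of T, \<beta>) \<in> ordLess; is_join A R T m\<rbrakk> \<Longrightarrow> h m = \<Union>(h ` T)"
  using assms unfolding ab_morphism_pow_def by simp_all

lemma not_ab_representable_if_nondistributive:
  fixes Q :: "'a set"
  assumes "(card_of {0::nat, 1}, \<alpha>) \<in> ordLess" "(card_of {0::nat, 1}, \<beta>) \<in> ordLess"
    and "a \<in> Q" "b \<in> Q" "c \<in> Q"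
    and "is_meet Q R {a, c} z" "is_meet Q R {b, c} z" "is_join Q R {a, b} t"
    and "R c t" "\<not> R c z"
  shows "\<not> ab_representable \<alpha> \<beta> Q R"
proof
  assume "ab_representable \<alpha> \<beta> Q R"
  then obtain X :: "'a set set" and h
    where morphism: "ab_morphism_pow \<alpha> \<beta> Q R X h" and embedding: "order_embedding_on Q R h"
    unfolding ab_representable_def by blast
  have "z \<in> Q" "t \<in> Q"
    using assms(6,8) unfolding is_meet_def is_join_def by blast+
  have "h z = X \<inter> h a \<inter> h c"
    using ab_morphism_powD(2)[OF morphism _ card_of_doubleton_ordLess[OF assms(1)] assms(6)] assms(3,5)
    by auto
  moreover have "h z = X \<inter> h b \<inter> h c"
    using ab_morphism_powD(2)[OF morphism _ card_of_doubleton_ordLess[OF assms(1)] assms(7)] assms(4,5)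
    by auto
  moreover have "h t = h a \<union> h b"
    using ab_morphism_powD(3)[OF morphism _ card_of_doubleton_ordLess[OF assms(2)] assms(8)] assms(3,4)
    by auto
  moreover have "h c \<subseteq> X"
    using ab_morphism_powD(1)[OF morphism assms(5)] .
  moreover have "h c \<subseteq> h t"
    using embedding assms(5,9) \<open>t \<in> Q\<close> unfolding order_embedding_on_def by blast
  ultimately have "h c \<subseteq> h z"
    by blast
  then show False
    using embedding assms(5,10) \<open>z \<in> Q\<close> unfolding order_embedding_on_def by blast
qed

lemma not_ab_representable_M3:
  fixes H :: "'a \<Rightarrow> 'b set"
  assumes "(card_of {0::nat, 1}, \<alpha>) \<in> ordLess" "(card_of {0::nat, 1}, \<beta>) \<in> ordLess"
    and "H z = {}" "H a = {u}" "H b = {v}" "H c = {w}" "H t = {u, v, w}"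
    and "u \<noteq> v" "u \<noteq> w" "v \<noteq> w"
  shows "\<not> ab_representable \<alpha> \<beta> {z, a, b, c, t} (\<lambda>x y. H x \<subseteq> H y)"
  by (rule not_ab_representable_if_nondistributive[OF assms(1,2), where a = a and b = b and c = c
        and z = z and t = t])
    (use assms(3-) in \<open>auto simp: is_meet_def is_join_def\<close>)

lemma ab_representable_not_hereditary:
  assumes "(card_of {0::nat, 1}, \<alpha>) \<in> ordLess" "(card_of {0::nat, 1}, \<beta>) \<in> ordLess"
    and "infinite (UNIV :: 'a set)"
  shows "\<exists>(A :: 'a set) R Q. ab_representable \<alpha> \<beta> A R \<and> Q \<subseteq> A \<and> Q \<noteq> {} \<and> \<not> ab_representable \<alpha> \<beta> Q R"
proof -
  have "infinite (UNIV :: 'a set set)"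
    using assms(3) finite_Pow_iff[of "UNIV :: 'a set"] by simp
  then obtain Y :: "'a set set" where "finite Y" "card Y = 3"
    using infinite_arbitrarily_large by blast
  then obtain u v w where Y: "Y = {u, v, w}" "u \<noteq> v" "v \<noteq> w" "u \<noteq> w"
    by (auto simp: card_3_iff)
  obtain A :: "'a set" where "finite A" "card A = card (Pow Y)"
    using infinite_arbitrarily_large[OF assms(3)] by blast
  then obtain H where H: "bij_betw H A (Pow Y)"
    using finite_same_card_bij[of A "Pow Y"] \<open>finite Y\<close> by auto
  then have representable: "ab_representable \<alpha> \<beta> A (\<lambda>x y. H x \<subseteq> H y)"
    by (intro ab_representable_set_family[where X = Y]) (auto simp: bij_betw_def)
  let ?G = "inv_into A H"
  have G: "?G S \<in> A" "H (?G S) = S" if "S \<subseteq> Y" for S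
    using H that by (auto simp: bij_betw_def inv_into_into f_inv_into_f)
  have "{?G {}, ?G {u}, ?G {v}, ?G {w}, ?G Y} \<subseteq> A"
    using G Y(1) by simp
  moreover have "\<not> ab_representable \<alpha> \<beta> {?G {}, ?G {u}, ?G {v}, ?G {w}, ?G Y} (\<lambda>x y. H x \<subseteq> H y)"
    by (rule not_ab_representable_M3[OF assms(1,2), where u = u and v = v and w = w])
      (use G Y in simp_all)
  ultimately show ?thesis
    using representable by blast
qed

theorem corollary2p9:
  fixes \<alpha> :: "'k rel" and \<beta> :: "'l rel"
  assumes "Card_order \<alpha>" and "Card_order \<beta>"
    and "(card_of {0::nat, 1}, \<alpha>) \<in> ordLess" and "(card_of {0::nat, 1}, \<beta>) \<in> ordLess"
    and "infinite (UNIV :: 'a set)"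
  shows "\<not> (\<exists>T. (\<forall>p\<in>T. universal_sentence p) \<and>
            (\<forall>(A :: 'a set) R. A \<noteq> {} \<longrightarrow> (fo_models A R T \<longleftrightarrow> ab_representable \<alpha> \<beta> A R)))"
proof
  assume "\<exists>T. (\<forall>p\<in>T. universal_sentence p) \<and>
            (\<forall>(A :: 'a set) R. A \<noteq> {} \<longrightarrow> (fo_models A R T \<longleftrightarrow> ab_representable \<alpha> \<beta> A R))"
  then obtain T where T_universal: "\<forall>p\<in>T. universal p"
    and axiomatizes: "\<And>(A :: 'a set) R. A \<noteq> {} \<Longrightarrow> fo_models A R T \<longleftrightarrow> ab_representable \<alpha> \<beta> A R"
    unfolding universal_sentence_def by blast
  obtain A :: "'a set" and R Q where "ab_representable \<alpha> \<beta> A R" "Q \<subseteq> A" "Q \<noteq> {}"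
    and not_representable: "\<not> ab_representable \<alpha> \<beta> Q R"
    using ab_representable_not_hereditary[OF assms(3-5)] by blast
  then have "fo_models A R T"
    using axiomatizes by blast
  then have "fo_models Q R T"
    using fo_models_universal_substructure[OF T_universal _ \<open>Q \<subseteq> A\<close>] by blast
  then show False
    using axiomatizes[OF \<open>Q \<noteq> {}\<close>] not_representable by blast
qed

end
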